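(* The series below converge and $$\sum_{n=0}^{\infty}\left(e^{-1}n!-D_n\right)=e^{-1}\int_0^{-1}\frac{e^{-t}}{1-t}\,dt=e^{-1}\sum_{n=0}^{\infty}D_n\frac{(-1)^{n+1}}{(n+1)!}.$$
   Context: $D_n=n!\sum_{k=0}^{n}\frac{(-1)^k}{k!}$ are the derangement numbers ($n\ge0$). Note $e^{-1}n!-D_n=n!\left(e^{-1}-\sum_{k=0}^n\frac{(-1)^k}{k!}\right)$. *)

theory Defs
  imports "HOL-Analysis.Analysis"
begin

definition D :: "nat \<Rightarrow> real" where
  "D n = fact n * (\<Sum>k\<le>n. (-1) ^ k / fact k)"

end

theory Submission
  imports Defs
begin

(* The n-th terms of both series are integrals over [-1, 0]:
   e^-1 n! - D n = - e^-1 * int e^-x x^n dx  and  D n (-1)^(n+1) / (n+1)! = - (D n / n!) * int x^n dx.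
   Their partial sums therefore integrate two truncations of the power series of e^-x / (1 - x):
   e^-x times a truncated geometric series, and the series with coefficients D n / n!,
   the Cauchy product of e^-x and 1 / (1 - x).  On [-1, 0] both truncations after N terms
   differ from e^-x / (1 - x) by O(|x|^N), whose integral is O(1 / N). *)

lemma one_minus_mult_sum_partial_sums:
  fixes a :: "nat \<Rightarrow> 'a::comm_ring_1"
  shows "(1 - x) * (\<Sum>n<N. (\<Sum>k\<le>n. a k) * x ^ n)
    = (\<Sum>n<N. a n * x ^ n) - (\<Sum>k<N. a k) * x ^ N"
proof (induction N)
  case 0
  then show ?case by simp
next
  case (Suc N)
  have "(1 - x) * (\<Sum>n<Suc N. (\<Sum>k\<le>n. a k) * x ^ n)
      = (\<Sum>n<N. a n * x ^ n) - (\<Sum>k<N. a k) * x ^ N + (1 - x) * ((\<Sum>k\<le>N. a k) * x ^ N)"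
    using Suc by (simp add: distrib_left)
  also have "\<dots> = (\<Sum>n<Suc N. a n * x ^ n) - (\<Sum>k<Suc N. a k) * x ^ Suc N"
    by (simp add: lessThan_Suc_atMost[symmetric] algebra_simps)
  finally show ?case .
qed

lemma DERIV_exp_minus_mult_exp_partial_sum:
  "((\<lambda>x. exp (-x) * (\<Sum>k\<le>n. x ^ k / fact k)) has_real_derivative
      - exp (-x) * x ^ n / fact n) (at x)"
proof (induction n)
  case 0
  then show ?case by (auto intro!: derivative_eq_intros)
next
  case (Suc n)
  have sum_Suc: "(\<lambda>x. exp (-x) * (\<Sum>k\<le>Suc n. x ^ k / fact k))
      = (\<lambda>x. exp (-x) * (\<Sum>k\<le>n. x ^ k / fact k) + exp (-x) * (x ^ Suc n / fact (Suc n)))"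
    by (simp add: distrib_left)
  have "((\<lambda>x. exp (-x) * (\<Sum>k\<le>n. x ^ k / fact k) + exp (-x) * (x ^ Suc n / fact (Suc n)))
      has_real_derivative - exp (-x) * x ^ n / fact n
        + (exp (-x) * (real (Suc n) * x ^ n) - exp (-x) * x ^ Suc n) / fact (Suc n)) (at x)"
    by (rule DERIV_add[OF Suc])
      (auto intro!: derivative_eq_intros simp: field_simps simp del: fact_Suc power_Suc)
  also have "- exp (-x) * x ^ n / fact n
        + (exp (-x) * (real (Suc n) * x ^ n) - exp (-x) * x ^ Suc n) / fact (Suc n)
      = - exp (-x) * x ^ Suc n / fact (Suc n)"
    by (simp add: diff_divide_distrib fact_Suc[of n] del: fact_Suc)
  finally show ?case
    unfolding sum_Suc .
qed

lemma exp_minus_times_power_has_integral: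
  "((\<lambda>x. exp (-x) * x ^ n) has_integral exp 1 * D n - fact n) {-1..0::real}"
proof -
  define F where "F x = - fact n * (exp (-x) * (\<Sum>k\<le>n. x ^ k / fact k))" for x :: real
  have "(F has_real_derivative exp (-x) * x ^ n) (at x)" for x
    unfolding F_def
    using DERIV_cmult[OF DERIV_exp_minus_mult_exp_partial_sum, of "- fact n" n x]
    by simp
  then have "((\<lambda>x. exp (-x) * x ^ n) has_integral F 0 - F (-1)) {-1..0}"
    by (intro fundamental_theorem_of_calculus)
      (auto intro: has_real_derivative_iff_has_vector_derivative[THEN iffD1] has_field_derivative_at_within)
  moreover have "F 0 - F (-1) = exp 1 * D n - fact n"
    by (simp add: F_def D_def power_0_left sum.atMost_shift)
  ultimately show ?thesis by simp
qed

lemma power_has_integral_minus_one_zero: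
  "((\<lambda>x. x ^ n) has_integral (-1) ^ n / real (Suc n)) {-1..0::real}"
proof -
  have "((\<lambda>x. x ^ Suc n / real (Suc n)) has_real_derivative x ^ n) (at x)" for x :: real
    by (auto intro!: derivative_eq_intros simp del: of_nat_Suc power_Suc)
  then have "((\<lambda>x. x ^ n) has_integral 0 ^ Suc n / real (Suc n) - (-1) ^ Suc n / real (Suc n)) {-1..0::real}"
    by (intro fundamental_theorem_of_calculus)
      (auto intro: has_real_derivative_iff_has_vector_derivative[THEN iffD1] has_field_derivative_at_within)
  then show ?thesis by simp
qed

lemma abs_power_has_integral_minus_one_zero:
  "((\<lambda>x. \<bar>x\<bar> ^ n) has_integral 1 / real (Suc n)) {-1..0::real}"
proof -
  have "((\<lambda>x. (-1) ^ n * x ^ n) has_integral (-1) ^ n * ((-1) ^ n / real (Suc n))) {-1..0::real}"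
    by (intro has_integral_mult_right power_has_integral_minus_one_zero)
  then have "((\<lambda>x. (-1) ^ n * x ^ n) has_integral 1 / real (Suc n)) {-1..0::real}"
    by (simp flip: power_mult_distrib)
  then show ?thesis
    by (rule has_integral_eq[rotated]) (simp add: abs_of_nonpos flip: power_mult_distrib)
qed

lemma exp_partial_sum_remainder_bound:
  fixes y :: real
  assumes "\<bar>y\<bar> \<le> 1"
  shows "\<bar>exp y - (\<Sum>k<N. y ^ k / fact k)\<bar> \<le> exp 1 * \<bar>y\<bar> ^ N"
proof -
  obtain t where t: "\<bar>t\<bar> \<le> \<bar>y\<bar>" and taylor: "exp y = (\<Sum>k<N. y ^ k / fact k) + exp t / fact N * y ^ N"
    using Maclaurin_exp_le by blast
  have "exp t / fact N \<le> exp t / 1"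
    by (rule divide_left_mono) auto
  also have "\<dots> \<le> exp 1"
    using t assms by simp
  finally have "exp t / fact N * \<bar>y\<bar> ^ N \<le> exp 1 * \<bar>y\<bar> ^ N"
    by (rule mult_right_mono) simp
  then show ?thesis
    by (simp add: taylor abs_mult power_abs)
qed

lemma integral_tendsto_of_power_bound:
  fixes g :: "nat \<Rightarrow> real \<Rightarrow> real"
  assumes g: "\<And>N. continuous_on {-1..0} (g N)" and f: "continuous_on {-1..0} f"
    and bound: "\<And>N x. x \<in> {-1..0} \<Longrightarrow> \<bar>g N x - f x\<bar> \<le> C * \<bar>x\<bar> ^ N"
  shows "(\<lambda>N. integral {-1..0} (g N)) \<longlonglongrightarrow> integral {-1..0} f"
proof -
  have "\<bar>integral {-1..0} (g N) - integral {-1..0} f\<bar> \<le> C / real (Suc N)" for N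
  proof -
    have majorant: "((\<lambda>x. C * \<bar>x\<bar> ^ N) has_integral C / real (Suc N)) {-1..0}"
      using has_integral_mult_right[OF abs_power_has_integral_minus_one_zero, of C N] by simp
    have diff_cont: "continuous_on {-1..0} (\<lambda>x. g N x - f x)"
      using g f by (rule continuous_on_diff)
    have "integral {-1..0} (g N) - integral {-1..0} f = integral {-1..0} (\<lambda>x. g N x - f x)"
      by (rule integral_diff[symmetric]) (auto intro: integrable_continuous_interval g f)
    also have "\<bar>\<dots>\<bar> \<le> integral {-1..0} (\<lambda>x. C * \<bar>x\<bar> ^ N)"
      using integrable_continuous_interval[OF diff_cont] has_integral_integrable[OF majorant] bound
      by (simp only: real_norm_def[symmetric]) (rule integral_norm_bound_integral)
    also have "\<dots> = C / real (Suc N)"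
      using majorant by (rule integral_unique)
    finally show ?thesis .
  qed
  then have "\<forall>\<^sub>F N in sequentially.
      norm (integral {-1..0} (g N) - integral {-1..0} f) \<le> C / real (Suc N)"
    by simp
  moreover have "(\<lambda>N. C / real (Suc N)) \<longlonglongrightarrow> 0"
    using LIMSEQ_Suc[OF lim_const_over_n[of C]] by simp
  ultimately have "(\<lambda>N. integral {-1..0} (g N) - integral {-1..0} f) \<longlonglongrightarrow> 0"
    by (rule Lim_null_comparison)
  then show ?thesis
    by (rule LIM_zero_cancel)
qed

lemma exp_fact_minus_D_sums:
  "(\<lambda>n. exp (-1) * fact n - D n) sums (- exp (-1) * integral {-1..0} (\<lambda>x::real. exp (-x) / (1 - x)))"
proof -
  have partial: "(\<Sum>n<N. exp (-1) * fact n - D n)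
      = - exp (-1) * integral {-1..0} (\<lambda>x. \<Sum>n<N. exp (-x) * x ^ n)" for N
  proof -
    have "((\<lambda>x. \<Sum>n<N. exp (-x) * x ^ n) has_integral (\<Sum>n<N. exp 1 * D n - fact n)) {-1..0}"
      by (intro has_integral_sum exp_minus_times_power_has_integral) auto
    moreover have "exp (-1) * fact n - D n = - exp (-1) * (exp 1 * D n - fact n)" for n
      by (simp add: algebra_simps flip: mult.assoc exp_add)
    ultimately show ?thesis
      by (simp add: integral_unique sum_distrib_left sum_negf)
  qed
  have "(\<lambda>N. integral {-1..0} (\<lambda>x::real. \<Sum>n<N. exp (-x) * x ^ n))
      \<longlonglongrightarrow> integral {-1..0} (\<lambda>x. exp (-x) / (1 - x))"
  proof (rule integral_tendsto_of_power_bound)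
    fix N and x :: real
    assume x: "x \<in> {-1..0}"
    have "(\<Sum>n<N. exp (-x) * x ^ n) - exp (-x) / (1 - x) = - exp (-x) * x ^ N / (1 - x)"
      using x by (simp add: sum_gp_strict diff_divide_distrib right_diff_distrib flip: sum_distrib_left)
    also have "\<bar>\<dots>\<bar> = exp (-x) * \<bar>x\<bar> ^ N / (1 - x)"
      using x by (simp add: abs_mult abs_div power_abs)
    also have "\<dots> \<le> exp (-x) * \<bar>x\<bar> ^ N / 1"
      using x by (intro divide_left_mono) auto
    also have "\<dots> \<le> exp 1 * \<bar>x\<bar> ^ N"
      using x by (simp add: mult_right_mono)
    finally show "\<bar>(\<Sum>n<N. exp (-x) * x ^ n) - exp (-x) / (1 - x)\<bar> \<le> exp 1 * \<bar>x\<bar> ^ N" .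
  qed (auto intro!: continuous_intros)
  then show ?thesis
    unfolding sums_def partial by (rule tendsto_mult_left)
qed

lemma D_div_fact_power_series_approx:
  fixes x :: real
  assumes x: "x \<in> {-1..0}"
  shows "\<bar>(\<Sum>n<N. D n / fact n * x ^ n) - exp (-x) / (1 - x)\<bar> \<le> (1 + 2 * exp 1) * \<bar>x\<bar> ^ N"
proof -
  define c where "c = (\<Sum>k<N. (-1) ^ k / fact k :: real)"
  define S where "S = (\<Sum>n<N. (-x) ^ n / fact n)"
  have "\<bar>exp (-1) - c\<bar> \<le> exp 1"
    using exp_partial_sum_remainder_bound[of "-1" N] by (simp add: c_def)
  moreover have "0 \<le> exp (-1::real)" "exp (-1) \<le> (1::real)"
    by simp_all
  ultimately have c_bound: "\<bar>c\<bar> \<le> 1 + exp 1"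
    by (simp only: abs_le_iff) linarith
  have "(1 - x) * (\<Sum>n<N. D n / fact n * x ^ n) = S - c * x ^ N"
    using one_minus_mult_sum_partial_sums[of x "\<lambda>k. (-1) ^ k / fact k" N]
    by (simp add: D_def c_def S_def power_minus')
  moreover have "1 - x \<ge> 1"
    using x by simp
  ultimately have "(\<Sum>n<N. D n / fact n * x ^ n) = (S - c * x ^ N) / (1 - x)"
    by (simp add: eq_divide_eq mult.commute)
  then have "(\<Sum>n<N. D n / fact n * x ^ n) - exp (-x) / (1 - x)
      = - ((exp (-x) - S) + c * x ^ N) / (1 - x)"
    by (simp add: diff_divide_distrib add_divide_distrib)
  then have "\<bar>(\<Sum>n<N. D n / fact n * x ^ n) - exp (-x) / (1 - x)\<bar>
      = \<bar>(exp (-x) - S) + c * x ^ N\<bar> / (1 - x)"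
    using \<open>1 - x \<ge> 1\<close> by (simp only: abs_divide abs_minus_cancel)
  also have "\<dots> \<le> \<bar>(exp (-x) - S) + c * x ^ N\<bar> / 1"
    using \<open>1 - x \<ge> 1\<close> by (intro divide_left_mono) auto
  also have "\<dots> \<le> \<bar>exp (-x) - S\<bar> + \<bar>c\<bar> * \<bar>x\<bar> ^ N"
    using abs_triangle_ineq[of "exp (-x) - S" "c * x ^ N"] by (simp add: abs_mult power_abs)
  also have "\<dots> \<le> exp 1 * \<bar>x\<bar> ^ N + (1 + exp 1) * \<bar>x\<bar> ^ N"
    using x exp_partial_sum_remainder_bound[of "-x" N] c_bound unfolding S_def
    by (intro add_mono mult_right_mono) auto
  finally show ?thesis
    by (simp add: algebra_simps)
qed

lemma D_alternating_sums:
  "(\<lambda>n. D n * (-1) ^ (n + 1) / fact (n + 1)) sums (- integral {-1..0} (\<lambda>x::real. exp (-x) / (1 - x)))"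
proof -
  have partial: "(\<Sum>n<N. D n * (-1) ^ (n + 1) / fact (n + 1))
      = - integral {-1..0} (\<lambda>x::real. \<Sum>n<N. D n / fact n * x ^ n)" for N
  proof -
    have "((\<lambda>x. \<Sum>n<N. D n / fact n * x ^ n) has_integral
        (\<Sum>n<N. D n / fact n * ((-1) ^ n / real (Suc n)))) {-1..0::real}"
      by (intro has_integral_sum has_integral_mult_right power_has_integral_minus_one_zero) auto
    moreover have "D n * (-1) ^ (n + 1) / fact (n + 1) = - (D n / fact n * ((-1) ^ n / real (Suc n)))" for n
      by (simp add: field_simps)
    ultimately show ?thesis
      by (simp only: integral_unique sum_negf)
  qed
  have "(\<lambda>N. integral {-1..0} (\<lambda>x::real. \<Sum>n<N. D n / fact n * x ^ n))
      \<longlonglongrightarrow> integral {-1..0} (\<lambda>x. exp (-x) / (1 - x))"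
    by (rule integral_tendsto_of_power_bound[OF _ _ D_div_fact_power_series_approx])
      (auto intro!: continuous_intros)
  then show ?thesis
    unfolding sums_def partial by (rule tendsto_minus)
qed

lemma ereal_minus_one: "ereal (-1) = -1"
  by (simp add: one_ereal_def)

lemma interval_integral_zero_minus_one_eq_integral:
  fixes f :: "real \<Rightarrow> real"
  assumes "continuous_on {-1..0} f"
  shows "(LBINT t=0..-1. f t) = - integral {-1..0} f"
proof -
  have "(LBINT t=0..-1. f t) = - (LBINT t=-1..0. f t)"
    by (rule interval_integral_endpoints_reverse)
  also have "(LBINT t=-1..0. f t) = integral {-1..0} f"
    using interval_integral_eq_integral[of "-1" 0 f] borel_integrable_atLeastAtMost'[OF assms]
    by (simp add: zero_ereal_def flip: ereal_minus_one)
  finally show ?thesis .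
qed

theorem mainTheorem13:
  shows "summable (\<lambda>n. exp (-1) * fact n - D n)
    \<and> summable (\<lambda>n. D n * (-1) ^ (n + 1) / fact (n + 1))
    \<and> interval_lebesgue_integrable lborel 0 (-1) (\<lambda>t::real. exp (-t) / (1 - t))
    \<and> (\<Sum>n. exp (-1) * fact n - D n) = exp (-1) * (LBINT t=0..-1. exp (-t) / (1 - t))
    \<and> exp (-1) * (LBINT t=0..-1. exp (-t) / (1 - t))
        = exp (-1) * (\<Sum>n. D n * (-1) ^ (n + 1) / fact (n + 1))"
proof (intro conjI)
  have kernel_cont: "continuous_on {-1..0} (\<lambda>t::real. exp (-t) / (1 - t))"
    by (intro continuous_intros) auto
  note integral = interval_integral_zero_minus_one_eq_integral[OF kernel_cont]
  show "summable (\<lambda>n. exp (-1) * fact n - D n)"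
    using exp_fact_minus_D_sums by (rule sums_summable)
  show "summable (\<lambda>n. D n * (-1) ^ (n + 1) / fact (n + 1))"
    using D_alternating_sums by (rule sums_summable)
  show "interval_lebesgue_integrable lborel 0 (-1) (\<lambda>t::real. exp (-t) / (1 - t))"
    using interval_integrable_isCont[of 0 "-1" "\<lambda>t::real. exp (-t) / (1 - t)"]
    by (simp add: zero_ereal_def ereal_minus_one)
  show "(\<Sum>n. exp (-1) * fact n - D n) = exp (-1) * (LBINT t=0..-1. exp (-t) / (1 - t))"
    using exp_fact_minus_D_sums by (simp add: sums_iff integral)
  show "exp (-1) * (LBINT t=0..-1. exp (-t) / (1 - t))
      = exp (-1) * (\<Sum>n. D n * (-1) ^ (n + 1) / fact (n + 1))"
    using D_alternating_sums by (simp add: sums_iff integral)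
qed

end
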